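(* Let $p$ be an $m$-dimensional subspace of the real projective space $P^n$ and $p^*$ an $(n-m-1)$-dimensional subspace with $p\cap p^*=\emptyset$, belonging to a normalized domain of the Grassmannian $G(m,n)$ (notation in the context). Let $(p',p^{*\prime})$ be the infinitesimally close $m$-pair, $p'=(A_0+dA_0)\wedge\dots\wedge(A_m+dA_m)$, $p^{*\prime}=(A_{m+1}+dA_{m+1})\wedge\dots\wedge(A_n+dA_n)$, and let $W$ be the cross-ratio of the $m$-pairs $(p,p^* )$ and $(p',p^{*\prime})$. Then the quadratic form $g=\omega_i^\alpha\omega_\alpha^i$ satisfies $$ g=\omega_i^\alpha\omega_\alpha^i=(m+1)\,\mathrm{pr.p.}\Bigl[\log\Bigl(\tfrac{1}{m+1}\,\mathrm{tr}\,W\Bigr)\Bigr]. $$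
   Context: Index ranges: $0\le\xi,\eta,\zeta\le n$; $0\le\alpha,\beta,\gamma\le m$; $m+1\le i,j,k\le n$; summation over repeated indices. A normalized domain: an open domain $U$ of the Grassmannian $G(m,n)$ of $m$-planes of $P^n$, together with a differentiable map $\nu$ assigning to each $p\in U$ an $(n-m-1)$-plane $p^*$ with $p\cap p^*=\emptyset$; the pair $(p,p^* )$ is called an $m$-pair. To each $m$-pair one associates moving point frames $\{A_\xi\}$ with $A_\alpha\in p$, $A_i\in p^*$, $p=A_0\wedge\dots\wedge A_m$, $p^*=A_{m+1}\wedge\dots\wedge A_n$, and $dA_\xi=\omega_\xi^\eta A_\eta$, where the 1-forms satisfy $d\omega_\xi^\eta=\omega_\xi^\zeta\wedge\omega_\zeta^\eta$. The forms $\omega_\alpha^i$ are the basis forms on $U$, and the normalization gives $\omega_i^\alpha=\lambda_{ij}^{\alpha\beta}\omega_\beta^j$. Matrix coordinates of an $m$-plane: the $(n+1)\times(m+1)$ matrix whose columns are coordinates (w.r.t. the frame $\{A_\xi\}$) of $m+1$ points spanning it; tangential matrix coordinates of an $(n-m-1)$-plane: the $(m+1)\times(n+1)$ matrix whose rows are coefficients of $m+1$ independent linear equations defining it. If $X,Y$ are matrix coordinates of $p,p'$ and $U,V$ tangential matrix coordinates of $p^*,p^{*\prime}$, the cross-ratio of the $m$-pairs $(p,p^* )$, $(p',p^{*\prime})$ is $W=X(UX)^{-1}(UY)(VY)^{-1}V$. Here $\mathrm{pr.p.}$ denotes the principal part, i.e. the lowest-order nonvanishing term of the expansion of the expression in the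 entries of the matrix $(\omega_\xi^\eta)$ (second order terms here, higher-order terms discarded). *)

theory Defs
  imports Complex_Main "Jordan_Normal_Form.Matrix"
begin

text \<open>All coordinates are taken w.r.t. the moving frame A_0..A_n, so A_xi has coordinate
  vector e_xi in R^(n+1). The 1-forms are represented by om xi eta = omega_xi^eta
  (dA_xi = omega_xi^eta A_eta), i.e. coordinates of dA_xi form column xi of the matrix
  with entry (eta,xi) = om xi eta.\<close>

definition kd :: "nat \<Rightarrow> nat \<Rightarrow> real" where
  "kd a b = (if a = b then 1 else 0)"

definition base_p :: "nat \<Rightarrow> nat \<Rightarrow> real mat" where
  "base_p n m = mat (n+1) (m+1) (\<lambda>(r,c). kd r c)"

definition base_pstar :: "nat \<Rightarrow> nat \<Rightarrow> real mat" where
  "base_pstar n m = mat (n+1) (n-m) (\<lambda>(r,c). kd r (m+1+c))"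

text \<open>columns = coordinates of A_alpha + dA_alpha, spanning p'\<close>
definition base_p' :: "nat \<Rightarrow> nat \<Rightarrow> (nat \<Rightarrow> nat \<Rightarrow> real) \<Rightarrow> real mat" where
  "base_p' n m om = mat (n+1) (m+1) (\<lambda>(r,c). kd r c + om c r)"

text \<open>columns = coordinates of A_i + dA_i, spanning p*'\<close>
definition base_pstar' :: "nat \<Rightarrow> nat \<Rightarrow> (nat \<Rightarrow> nat \<Rightarrow> real) \<Rightarrow> real mat" where
  "base_pstar' n m om = mat (n+1) (n-m) (\<lambda>(r,c). kd r (m+1+c) + om (m+1+c) r)"

definition colspace :: "real mat \<Rightarrow> real vec set" where
  "colspace A = {A *\<^sub>v y | y. y \<in> carrier_vec (dim_col A)}"

definition is_matrix_coords :: "nat \<Rightarrow> nat \<Rightarrow> real mat \<Rightarrow> real mat \<Rightarrow> bool" where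
  "is_matrix_coords n m X B \<longleftrightarrow> X \<in> carrier_mat (n+1) (m+1)
     \<and> (\<forall>y \<in> carrier_vec (m+1). X *\<^sub>v y = 0\<^sub>v (n+1) \<longrightarrow> y = 0\<^sub>v (m+1))
     \<and> colspace X = colspace B"

definition is_tangential_coords :: "nat \<Rightarrow> nat \<Rightarrow> real mat \<Rightarrow> real mat \<Rightarrow> bool" where
  "is_tangential_coords n m U C \<longleftrightarrow> U \<in> carrier_mat (m+1) (n+1)
     \<and> (\<forall>y \<in> carrier_vec (m+1). transpose_mat U *\<^sub>v y = 0\<^sub>v (n+1) \<longrightarrow> y = 0\<^sub>v (m+1))
     \<and> {x \<in> carrier_vec (n+1). U *\<^sub>v x = 0\<^sub>v (m+1)} = colspace C"

definition minv :: "real mat \<Rightarrow> real mat" where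
  "minv A = (SOME B. B \<in> carrier_mat (dim_row A) (dim_row A) \<and>
                     A * B = 1\<^sub>m (dim_row A) \<and> B * A = 1\<^sub>m (dim_row A))"

definition mtrace :: "real mat \<Rightarrow> real" where
  "mtrace A = (\<Sum>i<dim_row A. A $$ (i,i))"

definition cross_ratio :: "real mat \<Rightarrow> real mat \<Rightarrow> real mat \<Rightarrow> real mat \<Rightarrow> real mat" where
  "cross_ratio X U Y V = X * minv (U * X) * (U * Y) * minv (V * Y) * V"

definition gform :: "nat \<Rightarrow> nat \<Rightarrow> (nat \<Rightarrow> nat \<Rightarrow> real) \<Rightarrow> real" where
  "gform n m om = (\<Sum>i\<in>{m+1..n}. \<Sum>\<alpha>\<in>{0..m}. om i \<alpha> * om \<alpha> i)"

definition omsq :: "nat \<Rightarrow> (nat \<Rightarrow> nat \<Rightarrow> real) \<Rightarrow> real" where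
  "omsq n om = (\<Sum>\<xi>\<in>{0..n}. \<Sum>\<eta>\<in>{0..n}. (om \<xi> \<eta>)\<^sup>2)"

end

theory Submission imports Defs "Jordan_Normal_Form.Determinant" begin

text \<open>In frame coordinates p and p* are spanned by the first m+1 and the last n-m basis vectors,
  and the pair (p', p*') is the image of (p, p*) under M = 1 + N, where column xi of N holds the
  coordinates of dA_xi. For coordinates X, U of any pair of complementary planes (q, q*) the
  matrix X (UX)^-1 U is the projection onto q along q*, so it does not depend on the choice of
  coordinates. Hence W = E M E M^-1, where E is the coordinate projection onto p. Expanding
  M^-1 = 1 - N + N^2 - N^3 M^-1 gives tr W = (m+1) + g + O(|N|^3): the first-order terms cancel
  and tr(E N N) - tr(E N E N) is exactly omega_i^alpha omega_alpha^i. Finally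
  log(1 + x) = x + O(x^2) turns this into the claimed expansion of (m+1) log(tr W/(m+1)).\<close>

lemma mat_eq_by_mult_vec:
  fixes A B :: "'a::comm_ring_1 mat"
  assumes A: "A \<in> carrier_mat r c" and B: "B \<in> carrier_mat r c"
    and eq: "\<And>v. v \<in> carrier_vec c \<Longrightarrow> A *\<^sub>v v = B *\<^sub>v v"
  shows "A = B"
proof (rule eq_matI)
  fix i j assume i: "i < dim_row B" and j: "j < dim_col B"
  have "A $$ (i,j) = (A *\<^sub>v unit_vec c j) $ i" using A B i j by simp
  also have "\<dots> = (B *\<^sub>v unit_vec c j) $ i" using eq[of "unit_vec c j"] by simp
  also have "\<dots> = B $$ (i,j)" using A B i j by simp
  finally show "A $$ (i,j) = B $$ (i,j)" .
qed (use A B in auto)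

lemma index_mult_mat_sum:
  assumes "A \<in> carrier_mat a b" "B \<in> carrier_mat b c" "i < a" "j < c"
  shows "(A * B) $$ (i,j) = (\<Sum>k<b. A $$ (i,k) * B $$ (k,j))"
  using assms by (auto simp: scalar_prod_def lessThan_atLeast0 intro!: sum.cong)

lemma index_mult_mat_vec_sum:
  assumes "A \<in> carrier_mat a b" "v \<in> carrier_vec b" "i < a"
  shows "(A *\<^sub>v v) $ i = (\<Sum>k<b. A $$ (i,k) * v $ k)"
  using assms by (auto simp: scalar_prod_def lessThan_atLeast0 intro!: sum.cong)

lemma minv_inverse:
  fixes A :: "real mat"
  assumes A: "A \<in> carrier_mat k k"
    and inj: "\<And>y. y \<in> carrier_vec k \<Longrightarrow> A *\<^sub>v y = 0\<^sub>v k \<Longrightarrow> y = 0\<^sub>v k"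
  shows "minv A \<in> carrier_mat k k" and "A * minv A = 1\<^sub>m k" and "minv A * A = 1\<^sub>m k"
proof -
  have "det A \<noteq> 0" using det_0_iff_vec_prod_zero[OF A] inj by auto
  from det_non_zero_imp_unit[OF A this, of "()"] obtain B where
    "B \<in> carrier_mat k k" "A * B = 1\<^sub>m k" "B * A = 1\<^sub>m k"
    unfolding Units_def ring_mat_def by auto
  then have "\<exists>B. B \<in> carrier_mat (dim_row A) (dim_row A) \<and>
      A * B = 1\<^sub>m (dim_row A) \<and> B * A = 1\<^sub>m (dim_row A)"
    using A by auto
  from someI_ex[OF this] show "minv A \<in> carrier_mat k k" "A * minv A = 1\<^sub>m k" "minv A * A = 1\<^sub>m k"
    using A unfolding minv_def by auto
qed

lemma mult_mat_vec_zero[simp]: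
  fixes A :: "'a::comm_ring_1 mat"
  shows "A \<in> carrier_mat a b \<Longrightarrow> A *\<^sub>v 0\<^sub>v b = 0\<^sub>v a"
  by (intro eq_vecI) auto

lemma assoc_mult3_mat_vec:
  assumes "A \<in> carrier_mat a b" "B \<in> carrier_mat b c" "C \<in> carrier_mat c d" "v \<in> carrier_vec d"
  shows "(A * B * C) *\<^sub>v v = A *\<^sub>v (B *\<^sub>v (C *\<^sub>v v))"
proof -
  have "(A * B * C) *\<^sub>v v = (A * B) *\<^sub>v (C *\<^sub>v v)"
    by (rule assoc_mult_mat_vec[of _ a c]) (use assms in auto)
  also have "\<dots> = A *\<^sub>v (B *\<^sub>v (C *\<^sub>v v))"
    by (rule assoc_mult_mat_vec[of _ a b]) (use assms in auto)
  finally show ?thesis .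
qed

lemma colspace_iff: "z \<in> colspace A \<longleftrightarrow> (\<exists>y \<in> carrier_vec (dim_col A). z = A *\<^sub>v y)"
  unfolding colspace_def by blast

lemma colspace_carrier: "A \<in> carrier_mat a b \<Longrightarrow> z \<in> colspace A \<Longrightarrow> z \<in> carrier_vec a"
  unfolding colspace_iff by auto

lemma colspace_mult:
  assumes A: "A \<in> carrier_mat a b" and B: "B \<in> carrier_mat b c"
  shows "z \<in> colspace (A * B) \<longleftrightarrow> (\<exists>w \<in> colspace B. z = A *\<^sub>v w)"
proof
  assume "z \<in> colspace (A * B)"
  then obtain y where y: "y \<in> carrier_vec c" and z: "z = (A * B) *\<^sub>v y"
    unfolding colspace_iff using B by auto
  then have "B *\<^sub>v y \<in> colspace B" and "z = A *\<^sub>v (B *\<^sub>v y)"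
    unfolding colspace_iff using A B by auto
  then show "\<exists>w \<in> colspace B. z = A *\<^sub>v w" by blast
next
  assume "\<exists>w \<in> colspace B. z = A *\<^sub>v w"
  then obtain w where w: "w \<in> colspace B" and zw: "z = A *\<^sub>v w" by blast
  from w obtain y where y: "y \<in> carrier_vec c" and "w = B *\<^sub>v y"
    unfolding colspace_iff using B by auto
  with zw have "z = (A * B) *\<^sub>v y" using A B by simp
  then show "z \<in> colspace (A * B)" unfolding colspace_iff using y B by auto
qed

section \<open>Projections given by coordinates\<close>

definition projector :: "real mat \<Rightarrow> real mat \<Rightarrow> real mat" where
  "projector X U = X * minv (U * X) * U"

lemma cross_ratio_eq_projector_mult:
  assumes X: "X \<in> carrier_mat d k" and U: "U \<in> carrier_mat k d"
    and Y: "Y \<in> carrier_mat d k" and V: "V \<in> carrier_mat k d"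
    and C: "minv (U * X) \<in> carrier_mat k k" and D: "minv (V * Y) \<in> carrier_mat k k"
  shows "cross_ratio X U Y V = projector X U * projector Y V"
proof -
  let ?C = "minv (U * X)" and ?D = "minv (V * Y)"
  have XC: "X * ?C \<in> carrier_mat d k" and P: "X * ?C * U \<in> carrier_mat d d"
    and YD: "Y * ?D \<in> carrier_mat d k" using X U Y C D by auto
  have "X * ?C * (U * Y) * ?D * V = (X * ?C * U) * Y * ?D * V"
    using assoc_mult_mat[OF XC U Y] by simp
  also have "\<dots> = (X * ?C * U) * (Y * ?D * V)"
    using assoc_mult_mat[OF P Y D] assoc_mult_mat[OF P YD V] by simp
  finally show ?thesis unfolding cross_ratio_def projector_def .
qed

text \<open>Only the kernel of U enters.\<close>

lemma projector_of_coords: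
  assumes X: "is_matrix_coords n m X B" and U: "is_tangential_coords n m U C"
    and disjoint: "colspace B \<inter> colspace C \<subseteq> {0\<^sub>v (n+1)}"
  shows "minv (U * X) \<in> carrier_mat (m+1) (m+1)"
    and "projector X U \<in> carrier_mat (n+1) (n+1)"
    and "\<And>z. z \<in> colspace B \<Longrightarrow> projector X U *\<^sub>v z = z"
    and "\<And>z. z \<in> colspace C \<Longrightarrow> projector X U *\<^sub>v z = 0\<^sub>v (n+1)"
proof -
  from X have Xc: "X \<in> carrier_mat (n+1) (m+1)"
    and Xinj: "\<And>y. y \<in> carrier_vec (m+1) \<Longrightarrow> X *\<^sub>v y = 0\<^sub>v (n+1) \<Longrightarrow> y = 0\<^sub>v (m+1)"
    and XB: "colspace X = colspace B"
    unfolding is_matrix_coords_def by auto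
  from U have Uc: "U \<in> carrier_mat (m+1) (n+1)"
    and UC: "{x \<in> carrier_vec (n+1). U *\<^sub>v x = 0\<^sub>v (m+1)} = colspace C"
    unfolding is_tangential_coords_def by auto
  have UXc: "U * X \<in> carrier_mat (m+1) (m+1)" using Uc Xc by simp
  have UX_inj: "y = 0\<^sub>v (m+1)" if y: "y \<in> carrier_vec (m+1)" and "(U * X) *\<^sub>v y = 0\<^sub>v (m+1)" for y
  proof -
    have "X *\<^sub>v y \<in> colspace C" using that Uc Xc UC[symmetric] by auto
    moreover have "X *\<^sub>v y \<in> colspace X" using y Xc unfolding colspace_iff by auto
    ultimately have "X *\<^sub>v y = 0\<^sub>v (n+1)" using disjoint XB by blast
    then show ?thesis using Xinj y by blast
  qed
  note inv = minv_inverse[OF UXc UX_inj]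
  show Cc: "minv (U * X) \<in> carrier_mat (m+1) (m+1)" by (rule inv(1))
  show "projector X U \<in> carrier_mat (n+1) (n+1)" unfolding projector_def using Xc Uc Cc by simp
  show "projector X U *\<^sub>v z = z" if "z \<in> colspace B" for z
  proof -
    have "z \<in> colspace X" using that XB by simp
    then obtain y where y: "y \<in> carrier_vec (m+1)" and z: "z = X *\<^sub>v y"
      using Xc unfolding colspace_iff by auto
    have "projector X U *\<^sub>v z = X *\<^sub>v (minv (U * X) *\<^sub>v (U *\<^sub>v (X *\<^sub>v y)))"
      unfolding projector_def z by (rule assoc_mult3_mat_vec) (use Xc Uc Cc y in auto)
    also have "\<dots> = X *\<^sub>v (minv (U * X) *\<^sub>v ((U * X) *\<^sub>v y))"
      using Xc Uc y by simp
    also have "\<dots> = X *\<^sub>v y"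
      using inv(3) y Cc UXc by (simp flip: assoc_mult_mat_vec)
    finally show ?thesis using z by simp
  qed
  show "projector X U *\<^sub>v z = 0\<^sub>v (n+1)" if "z \<in> colspace C" for z
  proof -
    have z: "z \<in> carrier_vec (n+1)" "U *\<^sub>v z = 0\<^sub>v (m+1)" using that UC by auto
    then show ?thesis unfolding projector_def using Xc Uc Cc
      by (subst assoc_mult3_mat_vec[of _ "n+1" "m+1" _ "m+1" _ "n+1"]) auto
  qed
qed

definition proj_p :: "nat \<Rightarrow> nat \<Rightarrow> real mat" where
  "proj_p n m = mat (n+1) (n+1) (\<lambda>(r,c). if r = c \<and> r \<le> m then 1 else 0)"

text \<open>Transposed, so that column xi holds the coordinates of dA_xi.\<close>

definition omega_mat :: "nat \<Rightarrow> (nat \<Rightarrow> nat \<Rightarrow> real) \<Rightarrow> real mat" where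
  "omega_mat n om = mat (n+1) (n+1) (\<lambda>(r,c). om c r)"

lemma frame_carriers[simp]:
  "proj_p n m \<in> carrier_mat (n+1) (n+1)" "omega_mat n om \<in> carrier_mat (n+1) (n+1)"
  "base_p n m \<in> carrier_mat (n+1) (m+1)" "base_pstar n m \<in> carrier_mat (n+1) (n-m)"
  by (auto simp: proj_p_def omega_mat_def base_p_def base_pstar_def)

lemma frame_dims[simp]:
  "dim_row (proj_p n m) = n+1" "dim_col (proj_p n m) = n+1"
  "dim_row (omega_mat n om) = n+1" "dim_col (omega_mat n om) = n+1"
  "dim_row (base_p n m) = n+1" "dim_col (base_p n m) = m+1"
  "dim_row (base_pstar n m) = n+1" "dim_col (base_pstar n m) = n-m"
  by (auto simp: proj_p_def omega_mat_def base_p_def base_pstar_def)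

lemma sum_mult_kd: "(\<Sum>k<N. f k * kd k c) = (if c < N then f c else 0)"
  by (simp add: kd_def if_distrib cong: if_cong)

lemma base_p'_eq:
  assumes "m < n" shows "base_p' n m om = (1\<^sub>m (n+1) + omega_mat n om) * base_p n m"
proof (rule eq_matI)
  fix i j assume i: "i < dim_row ((1\<^sub>m (n+1) + omega_mat n om) * base_p n m)"
    and j: "j < dim_col ((1\<^sub>m (n+1) + omega_mat n om) * base_p n m)"
  have "((1\<^sub>m (n+1) + omega_mat n om) * base_p n m) $$ (i,j)
      = (\<Sum>k<n+1. (1\<^sub>m (n+1) + omega_mat n om) $$ (i,k) * kd k j)"
    using i j by (subst index_mult_mat_sum[of _ "n+1" "n+1" _ "m+1"]) (auto simp: base_p_def)
  also have "\<dots> = kd i j + om j i"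
    using i j assms by (subst sum_mult_kd) (simp add: omega_mat_def kd_def)
  finally show "base_p' n m om $$ (i,j) = ((1\<^sub>m (n+1) + omega_mat n om) * base_p n m) $$ (i,j)"
    using i j by (simp add: base_p'_def)
qed (auto simp: base_p'_def)

lemma base_pstar'_eq:
  assumes "m < n" shows "base_pstar' n m om = (1\<^sub>m (n+1) + omega_mat n om) * base_pstar n m"
proof (rule eq_matI)
  fix i j assume i: "i < dim_row ((1\<^sub>m (n+1) + omega_mat n om) * base_pstar n m)"
    and j: "j < dim_col ((1\<^sub>m (n+1) + omega_mat n om) * base_pstar n m)"
  have "((1\<^sub>m (n+1) + omega_mat n om) * base_pstar n m) $$ (i,j)
      = (\<Sum>k<n+1. (1\<^sub>m (n+1) + omega_mat n om) $$ (i,k) * kd k (m+1+j))"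
    using i j by (subst index_mult_mat_sum[of _ "n+1" "n+1" _ "n-m"]) (auto simp: base_pstar_def)
  also have "\<dots> = kd i (m+1+j) + om (m+1+j) i"
    using i j assms by (subst sum_mult_kd) (simp add: omega_mat_def kd_def)
  finally show "base_pstar' n m om $$ (i,j) = ((1\<^sub>m (n+1) + omega_mat n om) * base_pstar n m) $$ (i,j)"
    using i j by (simp add: base_pstar'_def)
qed (auto simp: base_pstar'_def)

lemma base_p_mult_vec:
  assumes "y \<in> carrier_vec (m+1)" "m < n"
  shows "base_p n m *\<^sub>v y = vec (n+1) (\<lambda>r. if r \<le> m then y $ r else 0)"
proof (rule eq_vecI)
  fix r assume r: "r < dim_vec (vec (n+1) (\<lambda>r. if r \<le> m then y $ r else 0))"
  have "(base_p n m *\<^sub>v y) $ r = (\<Sum>k<m+1. y $ k * kd r k)"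
    using r assms by (subst index_mult_mat_vec_sum[of _ "n+1" "m+1"])
      (auto simp: base_p_def mult.commute)
  also have "\<dots> = (\<Sum>k<m+1. y $ k * kd k r)" by (simp add: kd_def eq_commute)
  also have "\<dots> = (if r \<le> m then y $ r else 0)" by (simp add: sum_mult_kd)
  finally show "(base_p n m *\<^sub>v y) $ r = vec (n+1) (\<lambda>r. if r \<le> m then y $ r else 0) $ r"
    using r by simp
qed simp

lemma base_pstar_mult_vec:
  assumes "y \<in> carrier_vec (n-m)" "m < n"
  shows "base_pstar n m *\<^sub>v y = vec (n+1) (\<lambda>r. if m < r then y $ (r-m-1) else 0)"
proof (rule eq_vecI)
  fix r assume r: "r < dim_vec (vec (n+1) (\<lambda>r. if m < r then y $ (r-m-1) else 0))"
  have "(base_pstar n m *\<^sub>v y) $ r = (\<Sum>k<n-m. if k = r - m - 1 \<and> m < r then y $ k else 0)"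
    using r assms by (subst index_mult_mat_vec_sum[of _ "n+1" "n-m"])
      (auto simp: base_pstar_def kd_def intro!: sum.cong)
  also have "\<dots> = (if m < r then y $ (r-m-1) else 0)" using r assms by (auto simp: sum.delta)
  finally show "(base_pstar n m *\<^sub>v y) $ r = vec (n+1) (\<lambda>r. if m < r then y $ (r-m-1) else 0) $ r"
    using r by simp
qed simp

lemma colspace_base_p:
  assumes "m < n"
  shows "z \<in> colspace (base_p n m) \<longleftrightarrow> z \<in> carrier_vec (n+1) \<and> (\<forall>j. m < j \<and> j \<le> n \<longrightarrow> z $ j = 0)"
proof
  assume "z \<in> colspace (base_p n m)"
  then obtain y where "y \<in> carrier_vec (m+1)" "z = base_p n m *\<^sub>v y"
    unfolding colspace_iff by auto
  then show "z \<in> carrier_vec (n+1) \<and> (\<forall>j. m < j \<and> j \<le> n \<longrightarrow> z $ j = 0)"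
    using base_p_mult_vec assms by auto
next
  assume z: "z \<in> carrier_vec (n+1) \<and> (\<forall>j. m < j \<and> j \<le> n \<longrightarrow> z $ j = 0)"
  let ?y = "vec (m+1) (\<lambda>c. z $ c)"
  have "base_p n m *\<^sub>v ?y = z"
    using z assms by (subst base_p_mult_vec) (auto intro!: eq_vecI)
  then show "z \<in> colspace (base_p n m)" unfolding colspace_iff by (intro bexI[of _ ?y]) auto
qed

lemma colspace_base_pstar:
  assumes "m < n"
  shows "z \<in> colspace (base_pstar n m) \<longleftrightarrow> z \<in> carrier_vec (n+1) \<and> (\<forall>j. j \<le> m \<longrightarrow> z $ j = 0)"
proof
  assume "z \<in> colspace (base_pstar n m)"
  then obtain y where "y \<in> carrier_vec (n-m)" "z = base_pstar n m *\<^sub>v y"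
    unfolding colspace_iff by auto
  then show "z \<in> carrier_vec (n+1) \<and> (\<forall>j. j \<le> m \<longrightarrow> z $ j = 0)"
    using base_pstar_mult_vec assms by auto
next
  assume z: "z \<in> carrier_vec (n+1) \<and> (\<forall>j. j \<le> m \<longrightarrow> z $ j = 0)"
  let ?y = "vec (n-m) (\<lambda>c. z $ (m+1+c))"
  have "base_pstar n m *\<^sub>v ?y = z"
    using z assms by (subst base_pstar_mult_vec) (auto intro!: eq_vecI)
  then show "z \<in> colspace (base_pstar n m)" unfolding colspace_iff by (intro bexI[of _ ?y]) auto
qed

lemma colspace_base_p_base_pstar_disjoint:
  assumes "m < n" shows "colspace (base_p n m) \<inter> colspace (base_pstar n m) \<subseteq> {0\<^sub>v (n+1)}"
proof
  fix z assume z: "z \<in> colspace (base_p n m) \<inter> colspace (base_pstar n m)"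
  have "z = 0\<^sub>v (n+1)"
  proof (rule eq_vecI)
    fix i assume "i < dim_vec (0\<^sub>v (n+1) :: real vec)"
    then show "z $ i = 0\<^sub>v (n+1) $ i"
      using z unfolding Int_iff colspace_base_p[OF assms] colspace_base_pstar[OF assms]
      by (cases "i \<le> m") auto
  qed (use z colspace_carrier[OF frame_carriers(3)] in auto)
  then show "z \<in> {0\<^sub>v (n+1)}" by simp
qed

lemma index_proj_p_mult_vec:
  assumes v: "v \<in> carrier_vec (n+1)" and i: "i < n+1"
  shows "(proj_p n m *\<^sub>v v) $ i = (if i \<le> m then v $ i else 0)"
proof -
  have "(proj_p n m *\<^sub>v v) $ i = (\<Sum>k<n+1. proj_p n m $$ (i,k) * v $ k)"
    by (rule index_mult_mat_vec_sum) (use v i in auto)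
  also have "\<dots> = (\<Sum>k<n+1. if k = i then (if i \<le> m then v $ i else 0) else 0)"
    by (rule sum.cong[OF refl]) (use i in \<open>auto simp: proj_p_def\<close>)
  also have "\<dots> = (if i \<le> m then v $ i else 0)" by (subst sum.delta) (use i in auto)
  finally show ?thesis .
qed

lemma proj_p_unique:
  assumes m: "m < n" and Q: "Q \<in> carrier_mat (n+1) (n+1)"
    and fix_p: "\<And>z. z \<in> colspace (base_p n m) \<Longrightarrow> Q *\<^sub>v z = z"
    and kill_pstar: "\<And>z. z \<in> colspace (base_pstar n m) \<Longrightarrow> Q *\<^sub>v z = 0\<^sub>v (n+1)"
  shows "Q = proj_p n m"
proof (rule mat_eq_by_mult_vec[OF Q frame_carriers(1)])
  fix v :: "real vec" assume v: "v \<in> carrier_vec (n+1)"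
  let ?a = "proj_p n m *\<^sub>v v"
  have a: "?a \<in> carrier_vec (n+1)" using mult_mat_vec_carrier[OF frame_carriers(1) v] .
  have b: "v - ?a \<in> carrier_vec (n+1)" using minus_carrier_vec[OF v a] .
  have "?a $ j = 0" if "m < j" "j \<le> n" for j
    using index_proj_p_mult_vec[OF v, of j m] that by simp
  then have in_p: "?a \<in> colspace (base_p n m)" unfolding colspace_base_p[OF m] using a by blast
  have "(v - ?a) $ j = 0" if "j \<le> m" for j
  proof -
    have j: "j < n+1" using that m by simp
    then have "(v - ?a) $ j = v $ j - ?a $ j" using a by (simp only: index_minus_vec carrier_vecD)
    then show ?thesis using index_proj_p_mult_vec[OF v j, of m] that by simp
  qed
  then have in_pstar: "v - ?a \<in> colspace (base_pstar n m)"
    unfolding colspace_base_pstar[OF m] using b by blast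
  have "?a + (v - ?a) = v"
    using v a by (intro eq_vecI) (simp_all del: index_mult_mat_vec)
  then have "Q *\<^sub>v v = Q *\<^sub>v ?a + Q *\<^sub>v (v - ?a)"
    using mult_add_distrib_mat_vec[OF Q a b] by simp
  also have "\<dots> = ?a" using fix_p[OF in_p] kill_pstar[OF in_pstar] a by simp
  finally show "Q *\<^sub>v v = ?a" .
qed

section \<open>The entrywise l1 norm\<close>

definition mat_l1 :: "real mat \<Rightarrow> real" where
  "mat_l1 A = (\<Sum>i<dim_row A. \<Sum>j<dim_col A. \<bar>A $$ (i,j)\<bar>)"

definition vec_l1 :: "real vec \<Rightarrow> real" where
  "vec_l1 v = (\<Sum>i<dim_vec v. \<bar>v $ i\<bar>)"

lemma mat_l1_nonneg: "0 \<le> mat_l1 A"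
  unfolding mat_l1_def by (intro sum_nonneg) auto

lemma vec_l1_nonneg: "0 \<le> vec_l1 v"
  unfolding vec_l1_def by (intro sum_nonneg) auto

lemma abs_index_le_vec_l1: "k < dim_vec v \<Longrightarrow> \<bar>v $ k\<bar> \<le> vec_l1 v"
  unfolding vec_l1_def by (intro member_le_sum) auto

lemma row_l1_le_mat_l1: "k < dim_row B \<Longrightarrow> (\<Sum>j<dim_col B. \<bar>B $$ (k,j)\<bar>) \<le> mat_l1 B"
  unfolding mat_l1_def
  by (intro member_le_sum[where f = "\<lambda>k. \<Sum>j<dim_col B. \<bar>B $$ (k,j)\<bar>"]) (auto intro: sum_nonneg)

lemma mat_l1_mult:
  assumes A: "A \<in> carrier_mat a b" and B: "B \<in> carrier_mat b c"
  shows "mat_l1 (A * B) \<le> mat_l1 A * mat_l1 B"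
proof -
  have "mat_l1 (A * B) = (\<Sum>i<a. \<Sum>j<c. \<bar>\<Sum>k<b. A $$ (i,k) * B $$ (k,j)\<bar>)"
    unfolding mat_l1_def using A B
    by (intro sum.cong refl) (auto simp del: index_mult_mat simp: index_mult_mat_sum[OF A B] index_mult_mat(2,3))
  also have "\<dots> \<le> (\<Sum>i<a. \<Sum>j<c. \<Sum>k<b. \<bar>A $$ (i,k)\<bar> * \<bar>B $$ (k,j)\<bar>)"
    by (intro sum_mono) (auto simp: abs_mult[symmetric] intro: sum_abs[THEN order_trans])
  also have "\<dots> = (\<Sum>i<a. \<Sum>k<b. \<bar>A $$ (i,k)\<bar> * (\<Sum>j<c. \<bar>B $$ (k,j)\<bar>))"
    by (simp add: sum_distrib_left sum.swap[of _ "{..<c}"])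
  also have "\<dots> \<le> (\<Sum>i<a. \<Sum>k<b. \<bar>A $$ (i,k)\<bar> * mat_l1 B)"
    using B row_l1_le_mat_l1[of _ B] by (intro sum_mono mult_left_mono) auto
  also have "\<dots> = mat_l1 A * mat_l1 B"
    using A by (simp add: mat_l1_def sum_distrib_right)
  finally show ?thesis .
qed

lemma mat_l1_mult_le:
  assumes "A \<in> carrier_mat d d" "B \<in> carrier_mat d d" "mat_l1 A \<le> a" "mat_l1 B \<le> b"
  shows "mat_l1 (A * B) \<le> a * b"
proof -
  have "mat_l1 A * mat_l1 B \<le> a * b"
    by (rule mult_mono) (use assms mat_l1_nonneg[of A] mat_l1_nonneg[of B] in auto)
  then show ?thesis using mat_l1_mult[OF assms(1,2)] by linarith
qed

lemma vec_l1_mult_mat_vec: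
  assumes A: "A \<in> carrier_mat a b" and v: "v \<in> carrier_vec b"
  shows "vec_l1 (A *\<^sub>v v) \<le> mat_l1 A * vec_l1 v"
proof -
  have "vec_l1 (A *\<^sub>v v) = (\<Sum>i<a. \<bar>\<Sum>k<b. A $$ (i,k) * v $ k\<bar>)"
    unfolding vec_l1_def using A v
    by (intro sum.cong refl) (auto simp del: index_mult_mat_vec simp: index_mult_mat_vec_sum[OF A v])
  also have "\<dots> \<le> (\<Sum>i<a. \<Sum>k<b. \<bar>A $$ (i,k)\<bar> * \<bar>v $ k\<bar>)"
    by (intro sum_mono) (auto simp: abs_mult[symmetric] intro: sum_abs[THEN order_trans])
  also have "\<dots> \<le> (\<Sum>i<a. \<Sum>k<b. \<bar>A $$ (i,k)\<bar> * vec_l1 v)"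
    using v abs_index_le_vec_l1[of _ v] by (intro sum_mono mult_left_mono) auto
  also have "\<dots> = mat_l1 A * vec_l1 v"
    using A by (simp add: mat_l1_def sum_distrib_right)
  finally show ?thesis .
qed

lemma mat_l1_minus:
  "A \<in> carrier_mat a b \<Longrightarrow> B \<in> carrier_mat a b \<Longrightarrow> mat_l1 (A - B) \<le> mat_l1 A + mat_l1 B"
  unfolding mat_l1_def by (auto simp: sum.distrib[symmetric] intro!: sum_mono abs_triangle_ineq4)

lemma mat_l1_one: "mat_l1 (1\<^sub>m d) = real d"
proof -
  have "mat_l1 (1\<^sub>m d) = (\<Sum>i<d. \<Sum>j<d. if j = i then 1 else 0)"
    unfolding mat_l1_def by (auto intro!: sum.cong)
  then show ?thesis by simp
qed


lemma one_plus_mat_injective: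
  assumes N: "N \<in> carrier_mat d d" and small: "mat_l1 N < 1"
    and v: "v \<in> carrier_vec d" and kernel: "(1\<^sub>m d + N) *\<^sub>v v = 0\<^sub>v d"
  shows "v = 0\<^sub>v d"
proof -
  have "v + N *\<^sub>v v = 0\<^sub>v d" using kernel N v by (simp add: add_mult_distrib_mat_vec[of _ d d])
  then have "v $ i = - ((N *\<^sub>v v) $ i)" if "i < d" for i
  proof -
    have "(v + N *\<^sub>v v) $ i = 0" using \<open>v + N *\<^sub>v v = 0\<^sub>v d\<close> that by simp
    then show ?thesis using that v N by (simp del: index_mult_mat_vec)
  qed
  then have "vec_l1 v = vec_l1 (N *\<^sub>v v)"
    unfolding vec_l1_def using v N by (auto intro!: sum.cong)
  also have "\<dots> \<le> mat_l1 N * vec_l1 v" by (rule vec_l1_mult_mat_vec[OF N v])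
  finally have "vec_l1 v \<le> mat_l1 N * vec_l1 v" .
  then have "vec_l1 v = 0"
    using mult_strict_right_mono[OF small, of "vec_l1 v"] vec_l1_nonneg[of v] by fastforce
  then show ?thesis
    using v abs_index_le_vec_l1[of _ v] by (intro eq_vecI) fastforce+
qed

lemma inverse_of_one_plus_eq:
  fixes N K :: "real mat"
  assumes N: "N \<in> carrier_mat d d" and K: "K \<in> carrier_mat d d"
    and inverse: "(1\<^sub>m d + N) * K = 1\<^sub>m d"
  shows "K = 1\<^sub>m d - N * K"
proof -
  have "K + N * K = 1\<^sub>m d" using inverse N K by (simp add: add_mult_distrib_mat[of _ d d])
  show ?thesis
  proof (rule eq_matI)
    fix i j assume i: "i < dim_row (1\<^sub>m d - N * K)" and j: "j < dim_col (1\<^sub>m d - N * K)"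
    have "(K + N * K) $$ (i,j) = 1\<^sub>m d $$ (i,j)" using \<open>K + N * K = 1\<^sub>m d\<close> by simp
    then have "K $$ (i,j) + (N * K) $$ (i,j) = 1\<^sub>m d $$ (i,j)"
      using i j N K by (simp del: index_mult_mat index_one_mat)
    then show "K $$ (i,j) = (1\<^sub>m d - N * K) $$ (i,j)"
      using i j N K by (simp del: index_mult_mat index_one_mat)
  qed (use N K in auto)
qed

lemma mat_l1_inverse_of_one_plus:
  fixes N K :: "real mat"
  assumes N: "N \<in> carrier_mat d d" and K: "K \<in> carrier_mat d d" and K_eq: "K = 1\<^sub>m d - N * K"
    and small: "mat_l1 N \<le> 1/2"
  shows "mat_l1 K \<le> 2 * real d"
proof -
  have "mat_l1 K \<le> mat_l1 (1\<^sub>m d) + mat_l1 (N * K)"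
    using mat_l1_minus[OF one_carrier_mat, of "N * K" d] N K K_eq by simp
  also have "\<dots> \<le> real d + mat_l1 N * mat_l1 K" using mat_l1_mult[OF N K] by (simp add: mat_l1_one)
  also have "mat_l1 N * mat_l1 K \<le> 1/2 * mat_l1 K" using small mat_l1_nonneg[of K] by (rule mult_right_mono)
  finally show ?thesis by simp
qed

lemma abs_mtrace_le:
  assumes A: "A \<in> carrier_mat d d" and bound: "mat_l1 A \<le> a"
  shows "\<bar>mtrace A\<bar> \<le> a"
proof -
  have "\<bar>mtrace A\<bar> \<le> (\<Sum>i<d. \<bar>A $$ (i,i)\<bar>)"
    unfolding mtrace_def using A by (auto intro: sum_abs[THEN order_trans])
  also have "\<dots> \<le> (\<Sum>i<d. \<Sum>j<d. \<bar>A $$ (i,j)\<bar>)"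
    by (intro sum_mono member_le_sum[where f = "\<lambda>j. \<bar>A $$ (_,j)\<bar>"]) auto
  also have "\<dots> = mat_l1 A" unfolding mat_l1_def using A by auto
  finally show ?thesis using bound by linarith
qed

lemma mat_l1_proj_p: "mat_l1 (proj_p n m) \<le> real (n+1)"
proof -
  have "mat_l1 (proj_p n m) \<le> mat_l1 (1\<^sub>m (n+1))"
    unfolding mat_l1_def frame_dims index_one_mat(2,3) by (intro sum_mono) (auto simp: proj_p_def)
  then show ?thesis by (simp add: mat_l1_one)
qed

lemma mat_l1_omega_mat: "mat_l1 (omega_mat n om) \<le> real (n+1)^2 * sqrt (omsq n om)"
proof -
  have entry: "\<bar>om c r\<bar> \<le> sqrt (omsq n om)" if "c < n+1" "r < n+1" for c r
  proof -
    have "(om c r)\<^sup>2 \<le> (\<Sum>\<eta>\<in>{0..n}. (om c \<eta>)\<^sup>2)"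
      using that by (intro member_le_sum) auto
    also have "\<dots> \<le> omsq n om" unfolding omsq_def
      using that by (intro member_le_sum[where f = "\<lambda>\<xi>. \<Sum>\<eta>\<in>{0..n}. (om \<xi> \<eta>)\<^sup>2"]) (auto intro: sum_nonneg)
    finally show ?thesis by (simp add: real_le_rsqrt)
  qed
  have "mat_l1 (omega_mat n om) = (\<Sum>r<n+1. \<Sum>c<n+1. \<bar>om c r\<bar>)"
    unfolding mat_l1_def omega_mat_def by (auto intro!: sum.cong)
  also have "\<dots> \<le> (\<Sum>r<n+1. \<Sum>c<n+1. sqrt (omsq n om))"
    using entry by (intro sum_mono) auto
  also have "\<dots> = real (n+1)^2 * sqrt (omsq n om)" by (simp add: power2_eq_square)
  finally show ?thesis .
qed

lemma mtrace_add: "A \<in> carrier_mat d d \<Longrightarrow> B \<in> carrier_mat d d \<Longrightarrow> mtrace (A + B) = mtrace A + mtrace B"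
  unfolding mtrace_def by (auto simp: sum.distrib[symmetric] intro!: sum.cong)

lemma mtrace_minus: "A \<in> carrier_mat d d \<Longrightarrow> B \<in> carrier_mat d d \<Longrightarrow> mtrace (A - B) = mtrace A - mtrace B"
  unfolding mtrace_def by (auto simp: sum_subtractf[symmetric] intro!: sum.cong)

lemma mtrace_mult_neumann:
  fixes A N K :: "real mat"
  assumes A: "A \<in> carrier_mat d d" and N: "N \<in> carrier_mat d d" and K: "K \<in> carrier_mat d d"
    and K_eq: "K = 1\<^sub>m d - N * K"
  shows "mtrace (A * K) = mtrace A - mtrace (A * N * K)"
proof -
  have "A * K = A * (1\<^sub>m d - N * K)" using K_eq by simp
  also have "\<dots> = A * 1\<^sub>m d - A * (N * K)"
    by (rule mult_minus_distrib_mat[OF A]) (use N K in auto)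
  also have "\<dots> = A - A * N * K" using A N K by simp
  finally show ?thesis using A N K by (simp add: mtrace_minus[of _ d])
qed

text \<open>Three steps of the Neumann series K = 1 - N + N^2 - N^3 K.\<close>

lemma mtrace_conj_expansion:
  fixes E N K :: "real mat"
  assumes E: "E \<in> carrier_mat d d" and N: "N \<in> carrier_mat d d" and K: "K \<in> carrier_mat d d"
    and idem: "E * E = E" and K_eq: "K = 1\<^sub>m d - N * K"
  shows "mtrace (E * ((1\<^sub>m d + N) * E * K)) = mtrace E + mtrace (E*N*E) - mtrace (E*N)
     + mtrace (E*N*N) - mtrace (E*N*E*N) - mtrace (E*N*N*N*K) + mtrace (E*N*E*N*N*K)"
proof -
  have "E * ((1\<^sub>m d + N) * E * K) = E * E * K + E * N * E * K"
  proof -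
    have "(1\<^sub>m d + N) * E * K = E * K + N * E * K"
      using E N K by (simp add: add_mult_distrib_mat[of _ d d])
    then show ?thesis
      using E N K
      by (simp add: mult_add_distrib_mat[OF E, of "E * K" d "N * (E * K)"] assoc_mult_mat[of _ d d _ d _ d])
  qed
  then have "mtrace (E * ((1\<^sub>m d + N) * E * K)) = mtrace (E * K) + mtrace (E * N * E * K)"
    using E N K idem by (simp add: mtrace_add[of _ d] mult_carrier_mat[of _ d d _ d])
  moreover note neumann = mtrace_mult_neumann[OF _ N K K_eq]
  have "mtrace (E*K) = mtrace E - mtrace (E*N) + mtrace (E*N*N) - mtrace (E*N*N*N*K)"
    using neumann[of E] neumann[of "E*N"] neumann[of "E*N*N"] E N by (simp add: mult_carrier_mat[of _ d d _ d])
  moreover have "mtrace (E*N*E*K) = mtrace (E*N*E) - mtrace (E*N*E*N) + mtrace (E*N*E*N*N*K)"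
    using neumann[of "E*N*E"] neumann[of "E*N*E*N"] E N by (simp add: mult_carrier_mat[of _ d d _ d])
  ultimately show ?thesis by linarith
qed

lemma index_proj_p_mult:
  assumes A: "A \<in> carrier_mat (n+1) (n+1)" and i: "i < n+1" and j: "j < n+1"
  shows "(proj_p n m * A) $$ (i,j) = (if i \<le> m then A $$ (i,j) else 0)"
proof -
  have "(proj_p n m * A) $$ (i,j) = (\<Sum>k<n+1. proj_p n m $$ (i,k) * A $$ (k,j))"
    by (rule index_mult_mat_sum) (use A i j in auto)
  also have "\<dots> = (\<Sum>k<n+1. if k = i then (if i \<le> m then A $$ (i,j) else 0) else 0)"
    by (rule sum.cong[OF refl]) (use i j in \<open>auto simp: proj_p_def\<close>)
  also have "\<dots> = (if i \<le> m then A $$ (i,j) else 0)" by (subst sum.delta) (use i in auto)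
  finally show ?thesis .
qed

lemma index_mult_proj_p:
  assumes A: "A \<in> carrier_mat (n+1) (n+1)" and i: "i < n+1" and j: "j < n+1"
  shows "(A * proj_p n m) $$ (i,j) = (if j \<le> m then A $$ (i,j) else 0)"
proof -
  have "(A * proj_p n m) $$ (i,j) = (\<Sum>k<n+1. A $$ (i,k) * proj_p n m $$ (k,j))"
    by (rule index_mult_mat_sum) (use A i j in auto)
  also have "\<dots> = (\<Sum>k<n+1. if k = j then (if j \<le> m then A $$ (i,j) else 0) else 0)"
    by (rule sum.cong[OF refl]) (use i j in \<open>auto simp: proj_p_def\<close>)
  also have "\<dots> = (if j \<le> m then A $$ (i,j) else 0)" by (subst sum.delta) (use j in auto)
  finally show ?thesis .
qed

lemma proj_p_idem: "proj_p n m * proj_p n m = proj_p n m"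
proof (rule eq_matI)
  fix i j assume "i < dim_row (proj_p n m)" "j < dim_col (proj_p n m)"
  then show "(proj_p n m * proj_p n m) $$ (i,j) = proj_p n m $$ (i,j)"
    using index_proj_p_mult[of "proj_p n m" n i j m] by (auto simp del: index_mult_mat simp: proj_p_def)
qed auto

lemma sum_lessThan_if_le:
  fixes f :: "nat \<Rightarrow> real"
  assumes "m < N" shows "(\<Sum>i<N. if i \<le> m then f i else 0) = (\<Sum>i\<in>{0..m}. f i)"
proof -
  have "(\<Sum>i<N. if i \<le> m then f i else 0) = (\<Sum>i\<in>{i \<in> {..<N}. i \<le> m}. f i)"
    by (rule sum.inter_filter[symmetric]) simp
  also have "{i \<in> {..<N}. i \<le> m} = {0..m}" using assms by auto
  finally show ?thesis .
qed

lemma mtrace_proj_p: "m \<le> n \<Longrightarrow> mtrace (proj_p n m) = real (m+1)"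
  unfolding mtrace_def using sum_lessThan_if_le[of m "n+1" "\<lambda>_. 1"] by (simp add: proj_p_def)

lemma mtrace_carrier: "A \<in> carrier_mat d d \<Longrightarrow> mtrace A = (\<Sum>i<d. A $$ (i,i))"
  unfolding mtrace_def by simp

lemma mtrace_proj_p_mult_proj_p:
  assumes A: "A \<in> carrier_mat (n+1) (n+1)"
  shows "mtrace (proj_p n m * A * proj_p n m) = mtrace (proj_p n m * A)"
proof -
  have EA: "proj_p n m * A \<in> carrier_mat (n+1) (n+1)" using mult_carrier_mat[OF frame_carriers(1) A] .
  have "mtrace (proj_p n m * A * proj_p n m) = (\<Sum>i<n+1. (proj_p n m * A * proj_p n m) $$ (i,i))"
    using mult_carrier_mat[OF EA frame_carriers(1)] by (rule mtrace_carrier)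
  also have "\<dots> = (\<Sum>i<n+1. (proj_p n m * A) $$ (i,i))"
    by (rule sum.cong[OF refl]) (simp del: index_mult_mat add: index_mult_proj_p[OF EA] index_proj_p_mult[OF A])
  also have "\<dots> = mtrace (proj_p n m * A)" using EA by (simp only: mtrace_carrier)
  finally show ?thesis .
qed

lemma mtrace_proj_p_mult_mult:
  assumes m: "m \<le> n" and A: "A \<in> carrier_mat (n+1) (n+1)" and B: "B \<in> carrier_mat (n+1) (n+1)"
  shows "mtrace (proj_p n m * A * B) = (\<Sum>i\<in>{0..m}. \<Sum>k<n+1. A $$ (i,k) * B $$ (k,i))"
proof -
  have EA: "proj_p n m * A \<in> carrier_mat (n+1) (n+1)" using mult_carrier_mat[OF frame_carriers(1) A] .
  have "mtrace (proj_p n m * A * B) = (\<Sum>i<n+1. (proj_p n m * A * B) $$ (i,i))"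
    using mult_carrier_mat[OF EA B] by (rule mtrace_carrier)
  also have "\<dots> = (\<Sum>i<n+1. \<Sum>k<n+1. (proj_p n m * A) $$ (i,k) * B $$ (k,i))"
    by (intro sum.cong refl index_mult_mat_sum[OF EA B]) auto
  also have "\<dots> = (\<Sum>i<n+1. if i \<le> m then (\<Sum>k<n+1. A $$ (i,k) * B $$ (k,i)) else 0)"
    by (intro sum.cong refl) (simp add: index_proj_p_mult[OF A])
  also have "\<dots> = (\<Sum>i\<in>{0..m}. \<Sum>k<n+1. A $$ (i,k) * B $$ (k,i))"
    using m by (intro sum_lessThan_if_le) simp
  finally show ?thesis .
qed

lemma mtrace_proj_p_mult_proj_p_mult:
  assumes m: "m \<le> n" and A: "A \<in> carrier_mat (n+1) (n+1)" and B: "B \<in> carrier_mat (n+1) (n+1)"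
  shows "mtrace (proj_p n m * A * proj_p n m * B) = (\<Sum>i\<in>{0..m}. \<Sum>k\<in>{0..m}. A $$ (i,k) * B $$ (k,i))"
proof -
  have EA: "proj_p n m * A \<in> carrier_mat (n+1) (n+1)" using mult_carrier_mat[OF frame_carriers(1) A] .
  have EAE: "proj_p n m * A * proj_p n m \<in> carrier_mat (n+1) (n+1)"
    using mult_carrier_mat[OF EA frame_carriers(1)] .
  have "mtrace (proj_p n m * A * proj_p n m * B) = (\<Sum>i<n+1. (proj_p n m * A * proj_p n m * B) $$ (i,i))"
    using mult_carrier_mat[OF EAE B] by (rule mtrace_carrier)
  also have "\<dots> = (\<Sum>i<n+1. \<Sum>k<n+1. (proj_p n m * A * proj_p n m) $$ (i,k) * B $$ (k,i))"
    by (intro sum.cong refl index_mult_mat_sum[OF EAE B]) auto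
  also have "\<dots> = (\<Sum>i<n+1. if i \<le> m then
      (\<Sum>k<n+1. if k \<le> m then A $$ (i,k) * B $$ (k,i) else 0) else 0)"
  proof (rule sum.cong[OF refl])
    fix i assume "i \<in> {..<n+1}"
    then have i: "i < n+1" by simp
    have entry: "(proj_p n m * A * proj_p n m) $$ (i,k) * B $$ (k,i)
        = (if i \<le> m then (if k \<le> m then A $$ (i,k) * B $$ (k,i) else 0) else 0)"
      if "k \<in> {..<n+1}" for k
      using i that by (simp del: index_mult_mat add: index_mult_proj_p[OF EA] index_proj_p_mult[OF A])
    have "(\<Sum>k<n+1. (proj_p n m * A * proj_p n m) $$ (i,k) * B $$ (k,i))
        = (\<Sum>k<n+1. if i \<le> m then (if k \<le> m then A $$ (i,k) * B $$ (k,i) else 0) else 0)"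
      by (rule sum.cong[OF refl entry])
    also have "\<dots> = (if i \<le> m then (\<Sum>k<n+1. if k \<le> m then A $$ (i,k) * B $$ (k,i) else 0) else 0)"
      by (cases "i \<le> m") (simp_all only: if_True if_False sum.neutral_const)
    finally show "(\<Sum>k<n+1. (proj_p n m * A * proj_p n m) $$ (i,k) * B $$ (k,i))
        = (if i \<le> m then (\<Sum>k<n+1. if k \<le> m then A $$ (i,k) * B $$ (k,i) else 0) else 0)" .
  qed
  also have "\<dots> = (\<Sum>i\<in>{0..m}. \<Sum>k\<in>{0..m}. A $$ (i,k) * B $$ (k,i))"
  proof -
    have "m < n+1" using m by simp
    then show ?thesis by (simp only: sum_lessThan_if_le)
  qed
  finally show ?thesis .
qed

lemma gform_eq_mtrace:
  fixes om :: "nat \<Rightarrow> nat \<Rightarrow> real"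
  assumes m: "m < n"
  defines "E \<equiv> proj_p n m" and "N \<equiv> omega_mat n om"
  shows "gform n m om = mtrace (E * N * N) - mtrace (E * N * E * N)"
proof -
  have N: "N \<in> carrier_mat (n+1) (n+1)" unfolding N_def by (rule frame_carriers)
  have split: "(\<Sum>k<n+1. f k) - (\<Sum>k\<in>{0..m}. f k) = (\<Sum>k\<in>{m+1..n}. f k)" for f :: "nat \<Rightarrow> real"
  proof -
    have "{..<n+1} = {0..m} \<union> {m+1..n}" using m by auto
    then have "(\<Sum>k<n+1. f k) = (\<Sum>k\<in>{0..m}. f k) + (\<Sum>k\<in>{m+1..n}. f k)"
      by (simp add: sum.union_disjoint)
    then show ?thesis by simp
  qed
  have "mtrace (E * N * N) - mtrace (E * N * E * N)
      = (\<Sum>\<alpha>\<in>{0..m}. (\<Sum>k<n+1. N $$ (\<alpha>,k) * N $$ (k,\<alpha>)) - (\<Sum>k\<in>{0..m}. N $$ (\<alpha>,k) * N $$ (k,\<alpha>)))"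
    unfolding E_def using m N
    by (simp only: mtrace_proj_p_mult_mult mtrace_proj_p_mult_proj_p_mult less_imp_le sum_subtractf)
  also have "\<dots> = (\<Sum>\<alpha>\<in>{0..m}. \<Sum>i\<in>{m+1..n}. N $$ (\<alpha>,i) * N $$ (i,\<alpha>))"
    by (simp only: split)
  also have "\<dots> = (\<Sum>\<alpha>\<in>{0..m}. \<Sum>i\<in>{m+1..n}. om i \<alpha> * om \<alpha> i)"
    using m by (intro sum.cong refl) (simp add: N_def omega_mat_def)
  also have "\<dots> = gform n m om" unfolding gform_def by (rule sum.swap)
  finally show ?thesis by simp
qed

section \<open>The cross-ratio of infinitesimally close pairs\<close>




lemma projector_of_image_coords:
  assumes m: "m < n" and M: "M \<in> carrier_mat (n+1) (n+1)" and K: "K \<in> carrier_mat (n+1) (n+1)"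
    and MK: "M * K = 1\<^sub>m (n+1)" and KM: "K * M = 1\<^sub>m (n+1)"
    and Y: "is_matrix_coords n m Y (M * base_p n m)"
    and V: "is_tangential_coords n m V (M * base_pstar n m)"
  shows "minv (V * Y) \<in> carrier_mat (m+1) (m+1)" and "projector Y V = M * proj_p n m * K"
proof -
  have recover: "K *\<^sub>v (M *\<^sub>v w) = w" if "w \<in> carrier_vec (n+1)" for w
    using KM K M that by (simp flip: assoc_mult_mat_vec)
  note image_p = colspace_mult[OF M frame_carriers(3)]
    and image_pstar = colspace_mult[OF M frame_carriers(4)]
  have "colspace (M * base_p n m) \<inter> colspace (M * base_pstar n m) \<subseteq> {0\<^sub>v (n+1)}"
  proof
    fix z assume "z \<in> colspace (M * base_p n m) \<inter> colspace (M * base_pstar n m)"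
    then obtain w1 w2 where w1: "w1 \<in> colspace (base_p n m)" "z = M *\<^sub>v w1"
      and w2: "w2 \<in> colspace (base_pstar n m)" "z = M *\<^sub>v w2"
      unfolding Int_iff image_p image_pstar by blast
    have "w1 = w2"
      using recover[OF colspace_carrier[OF frame_carriers(3) w1(1)]]
        recover[OF colspace_carrier[OF frame_carriers(4) w2(1)]] w1(2) w2(2) by simp
    then have "w1 = 0\<^sub>v (n+1)" using colspace_base_p_base_pstar_disjoint[OF m] w1(1) w2(1) by blast
    then show "z \<in> {0\<^sub>v (n+1)}" using w1(2) M by simp
  qed
  note P = projector_of_coords[OF Y V this]
  show "minv (V * Y) \<in> carrier_mat (m+1) (m+1)" by (rule P(1))
  have KPM: "(K * projector Y V * M) *\<^sub>v z = K *\<^sub>v (projector Y V *\<^sub>v (M *\<^sub>v z))"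
    if "z \<in> carrier_vec (n+1)" for z
    by (rule assoc_mult3_mat_vec[OF K P(2) M that])
  have conj: "K * projector Y V * M = proj_p n m"
  proof (rule proj_p_unique[OF m])
    show "K * projector Y V * M \<in> carrier_mat (n+1) (n+1)" using K P(2) M by simp
  next
    fix z assume z: "z \<in> colspace (base_p n m)"
    then have "M *\<^sub>v z \<in> colspace (M * base_p n m)" unfolding image_p by blast
    then show "(K * projector Y V * M) *\<^sub>v z = z"
      using P(3) recover KPM colspace_carrier[OF frame_carriers(3) z] by simp
  next
    fix z assume z: "z \<in> colspace (base_pstar n m)"
    then have "M *\<^sub>v z \<in> colspace (M * base_pstar n m)" unfolding image_pstar by blast
    then show "(K * projector Y V * M) *\<^sub>v z = 0\<^sub>v (n+1)"
      using P(4) K KPM colspace_carrier[OF frame_carriers(4) z] by simp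
  qed
  have "projector Y V = (M * K) * projector Y V * (M * K)" using MK P(2) by simp
  also have "\<dots> = M * (K * projector Y V * M) * K"
    using M K P(2)
    by (simp add: assoc_mult_mat[of _ "n+1" "n+1" _ "n+1" _ "n+1"] mult_carrier_mat[of _ "n+1" "n+1" _ "n+1"])
  finally show "projector Y V = M * proj_p n m * K" unfolding conj .
qed

lemma cross_ratio_in_frame:
  fixes om :: "nat \<Rightarrow> nat \<Rightarrow> real"
  assumes m: "m < n" and small: "mat_l1 (omega_mat n om) < 1"
    and X: "is_matrix_coords n m X (base_p n m)" and U: "is_tangential_coords n m U (base_pstar n m)"
    and Y: "is_matrix_coords n m Y (base_p' n m om)" and V: "is_tangential_coords n m V (base_pstar' n m om)"
  defines "M \<equiv> 1\<^sub>m (n+1) + omega_mat n om"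
  obtains K where "K \<in> carrier_mat (n+1) (n+1)" "M * K = 1\<^sub>m (n+1)"
    "cross_ratio X U Y V = proj_p n m * (M * proj_p n m * K)"
proof -
  have M: "M \<in> carrier_mat (n+1) (n+1)" unfolding M_def by (rule add_carrier_mat[OF frame_carriers(2)])
  have "w = 0\<^sub>v (n+1)" if "w \<in> carrier_vec (n+1)" "M *\<^sub>v w = 0\<^sub>v (n+1)" for w
    using one_plus_mat_injective[OF frame_carriers(2) small that[unfolded M_def]] .
  note inv = minv_inverse[OF M this]
  define K where "K = minv M"
  have K: "K \<in> carrier_mat (n+1) (n+1)" and MK: "M * K = 1\<^sub>m (n+1)" and KM: "K * M = 1\<^sub>m (n+1)"
    using inv unfolding K_def by auto
  note P = projector_of_coords[OF X U colspace_base_p_base_pstar_disjoint[OF m]]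
  note P' = projector_of_image_coords[OF m M K MK KM, of Y V]
  have "X \<in> carrier_mat (n+1) (m+1)" "Y \<in> carrier_mat (n+1) (m+1)"
    "U \<in> carrier_mat (m+1) (n+1)" "V \<in> carrier_mat (m+1) (n+1)"
    using X Y U V unfolding is_matrix_coords_def is_tangential_coords_def by auto
  then have "cross_ratio X U Y V = proj_p n m * (M * proj_p n m * K)"
    using cross_ratio_eq_projector_mult[OF _ _ _ _ P(1)] P' proj_p_unique[OF m P(2-4)]
      Y V unfolding base_p'_eq[OF m] base_pstar'_eq[OF m] M_def[symmetric] by simp
  with that K MK show ?thesis by blast
qed

lemma mtrace_cross_ratio_expansion:
  fixes om :: "nat \<Rightarrow> nat \<Rightarrow> real"
  assumes m: "m < n" and small: "mat_l1 (omega_mat n om) < 1"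
    and X: "is_matrix_coords n m X (base_p n m)" and U: "is_tangential_coords n m U (base_pstar n m)"
    and Y: "is_matrix_coords n m Y (base_p' n m om)" and V: "is_tangential_coords n m V (base_pstar' n m om)"
  defines "E \<equiv> proj_p n m" and "N \<equiv> omega_mat n om"
  obtains K where "K \<in> carrier_mat (n+1) (n+1)" "K = 1\<^sub>m (n+1) - N * K"
    "mtrace (cross_ratio X U Y V) = real (m+1) + gform n m om - mtrace (E*N*N*N*K) + mtrace (E*N*E*N*N*K)"
proof -
  have E: "E \<in> carrier_mat (n+1) (n+1)" and N: "N \<in> carrier_mat (n+1) (n+1)"
    unfolding E_def N_def by (rule frame_carriers)+
  obtain K where K: "K \<in> carrier_mat (n+1) (n+1)" and inverse: "(1\<^sub>m (n+1) + N) * K = 1\<^sub>m (n+1)"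
    and W: "cross_ratio X U Y V = E * ((1\<^sub>m (n+1) + N) * E * K)"
    using cross_ratio_in_frame[OF m small X U Y V] unfolding E_def N_def by blast
  have K_eq: "K = 1\<^sub>m (n+1) - N * K" by (rule inverse_of_one_plus_eq[OF N K inverse])
  have "mtrace (cross_ratio X U Y V) = mtrace E + (mtrace (E*N*E) - mtrace (E*N))
      + (mtrace (E*N*N) - mtrace (E*N*E*N)) - mtrace (E*N*N*N*K) + mtrace (E*N*E*N*N*K)"
    unfolding W mtrace_conj_expansion[OF E N K proj_p_idem[of n m, folded E_def] K_eq] by simp
  also have "\<dots> = real (m+1) + gform n m om - mtrace (E*N*N*N*K) + mtrace (E*N*E*N*N*K)"
    using m unfolding E_def N_def
    by (simp add: mtrace_proj_p mtrace_proj_p_mult_proj_p[OF frame_carriers(2)] gform_eq_mtrace)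
  finally show ?thesis using that K K_eq by blast
qed

lemma abs_gform_le:
  fixes om :: "nat \<Rightarrow> nat \<Rightarrow> real"
  assumes m: "m < n"
  shows "\<bar>gform n m om\<bar> \<le> 4 * real (n+1)^3 * mat_l1 (omega_mat n om)^2"
proof -
  let ?c = "real (n+1)" and ?s = "mat_l1 (omega_mat n om)"
  let ?E = "proj_p n m" and ?N = "omega_mat n om"
  have c: "?c \<le> ?c^3" "?c^2 \<le> ?c^3" "0 \<le> ?c^3"
    using power_increasing[of 1 3 ?c] power_increasing[of 2 3 ?c] by auto
  note rules = abs_mtrace_le[where d = "n+1"] mat_l1_mult_le[where d = "n+1"]
    mult_carrier_mat[of _ "n+1" "n+1" _ "n+1"] frame_carriers(1,2) mat_l1_proj_p order_refl
  have "\<bar>mtrace (?E*?N*?N)\<bar> \<le> ?c * ?s * ?s" by (intro rules)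
  moreover have "\<bar>mtrace (?E*?N*?E*?N)\<bar> \<le> ?c * ?s * ?c * ?s" by (intro rules)
  ultimately have "\<bar>gform n m om\<bar> \<le> ?c * ?s * ?s + ?c * ?s * ?c * ?s"
    unfolding gform_eq_mtrace[OF m] by linarith
  also have "\<dots> = (?c + ?c^2) * ?s^2" by (simp add: power2_eq_square algebra_simps)
  also have "\<dots> \<le> 4 * ?c^3 * ?s^2" using c by (intro mult_right_mono) auto
  finally show ?thesis .
qed

lemma abs_mtrace_cross_ratio_remainder_le:
  fixes om :: "nat \<Rightarrow> nat \<Rightarrow> real"
  assumes m: "m < n" and small: "mat_l1 (omega_mat n om) \<le> 1/2"
    and X: "is_matrix_coords n m X (base_p n m)" and U: "is_tangential_coords n m U (base_pstar n m)"
    and Y: "is_matrix_coords n m Y (base_p' n m om)" and V: "is_tangential_coords n m V (base_pstar' n m om)"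
  shows "\<bar>mtrace (cross_ratio X U Y V) - real (m+1) - gform n m om\<bar>
    \<le> 4 * real (n+1)^3 * mat_l1 (omega_mat n om)^3"
proof -
  let ?c = "real (n+1)" and ?s = "mat_l1 (omega_mat n om)"
  let ?E = "proj_p n m" and ?N = "omega_mat n om"
  have c: "?c^2 \<le> ?c^3" "0 \<le> ?c^3"
    using power_increasing[of 2 3 ?c] by auto
  have "?s < 1" using small by simp
  then obtain K where K: "K \<in> carrier_mat (n+1) (n+1)" and K_eq: "K = 1\<^sub>m (n+1) - ?N * K"
    and trace: "mtrace (cross_ratio X U Y V)
      = real (m+1) + gform n m om - mtrace (?E*?N*?N*?N*K) + mtrace (?E*?N*?E*?N*?N*K)"
    using mtrace_cross_ratio_expansion[OF m _ X U Y V] by blast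
  have lK: "mat_l1 K \<le> 2 * ?c"
    using mat_l1_inverse_of_one_plus[OF frame_carriers(2) K K_eq small] .
  note rules = abs_mtrace_le[where d = "n+1"] mat_l1_mult_le[where d = "n+1"]
    mult_carrier_mat[of _ "n+1" "n+1" _ "n+1"] frame_carriers(1,2) K mat_l1_proj_p order_refl lK
  have "\<bar>mtrace (?E*?N*?N*?N*K)\<bar> \<le> ?c * ?s * ?s * ?s * (2 * ?c)"
    by (intro rules)
  moreover have "\<bar>mtrace (?E*?N*?E*?N*?N*K)\<bar> \<le> ?c * ?s * ?c * ?s * ?s * (2 * ?c)"
    by (intro rules)
  ultimately have "\<bar>mtrace (cross_ratio X U Y V) - real (m+1) - gform n m om\<bar>
      \<le> ?c * ?s * ?s * ?s * (2 * ?c) + ?c * ?s * ?c * ?s * ?s * (2 * ?c)"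
    unfolding trace by linarith
  also have "\<dots> = (2 * ?c^2 + 2 * ?c^3) * ?s^3" by (simp add: power2_eq_square power3_eq_cube algebra_simps)
  also have "\<dots> \<le> 4 * ?c^3 * ?s^3" using c mat_l1_nonneg by (intro mult_right_mono) auto
  finally show ?thesis .
qed

lemma ln_ratio_expansion:
  fixes a t g s C :: real
  assumes a: "1 \<le> a" and s: "0 \<le> s" "s \<le> 1" and C: "0 \<le> C" "4 * C * s \<le> 1"
    and g: "\<bar>g\<bar> \<le> C * s^2" and t: "\<bar>t - a - g\<bar> \<le> C * s^3"
  shows "\<bar>a * ln (t / a) - g\<bar> \<le> (8 * a * C^2 + C) * s^3"
proof -
  define x where "x = (t - a) / a"
  have ax: "a * x = t - a" unfolding x_def using a by simp
  have t_div: "t / a = 1 + x" unfolding x_def using a by (simp add: field_simps)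
  have s32: "s^3 \<le> s^2" and s43: "s^4 \<le> s^3" using s by (simp_all add: power_decreasing)
  have "\<bar>t - a\<bar> \<le> C * s^2 + C * s^3" using g t by linarith
  also have "\<dots> \<le> 2 * C * s^2" using mult_left_mono[OF s32 C(1)] by linarith
  finally have "\<bar>t - a\<bar> \<le> 2 * C * s^2" .
  moreover have "\<bar>x\<bar> \<le> \<bar>t - a\<bar>"
    unfolding x_def using a by (simp add: abs_divide divide_le_eq mult_le_cancel_left1)
  ultimately have x: "\<bar>x\<bar> \<le> 2 * C * s^2" by linarith
  have "2 * C * s^2 = 2 * (C * s) * s" by (simp add: power2_eq_square)
  also have "\<dots> \<le> 2 * (1/4) * 1" using C s by (intro mult_mono) auto
  finally have "\<bar>x\<bar> \<le> 1/2" using x by linarith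
  then have ln: "\<bar>ln (1 + x) - x\<bar> \<le> 2 * x^2" by (rule abs_ln_one_plus_x_minus_x_bound)
  have "x^2 \<le> (2 * C * s^2)^2" using power_mono[OF x, of 2] by simp
  also have "\<dots> = 4 * C^2 * s^4" by (simp add: power_mult_distrib flip: power_mult)
  also have "\<dots> \<le> 4 * C^2 * s^3" using s43 by (intro mult_left_mono) auto
  finally have x2: "x^2 \<le> 4 * C^2 * s^3" .
  have "a * ln (t / a) - g = a * (ln (1 + x) - x) + (t - a - g)"
    unfolding t_div using ax by (simp add: algebra_simps)
  then have "\<bar>a * ln (t / a) - g\<bar> \<le> \<bar>a * (ln (1 + x) - x)\<bar> + \<bar>t - a - g\<bar>"
    by (simp only: abs_triangle_ineq)
  also have "\<dots> = a * \<bar>ln (1 + x) - x\<bar> + \<bar>t - a - g\<bar>" using a by (simp add: abs_mult)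
  also have "\<dots> \<le> a * (8 * C^2 * s^3) + C * s^3"
    using ln x2 t a by (intro add_mono mult_left_mono) auto
  also have "\<dots> = (8 * a * C^2 + C) * s^3" by (simp add: algebra_simps)
  finally show ?thesis .
qed

lemma little_o_square_of_cubic_bound:
  fixes F s q :: "'a \<Rightarrow> real"
  assumes r: "0 < r" and \<sigma>: "0 < \<sigma>" and c: "0 < c"
    and s_nonneg: "\<And>x. 0 \<le> s x" and s_le: "\<And>x. s x \<le> c * sqrt (q x)"
    and cubic: "\<And>x. q x < r \<Longrightarrow> s x \<le> \<sigma> \<Longrightarrow> \<bar>F x\<bar> \<le> K * s x ^ 3"
  shows "\<forall>\<epsilon>>0. \<exists>\<delta>>0. \<forall>x. q x < \<delta> \<longrightarrow> \<bar>F x\<bar> \<le> \<epsilon> * q x"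
proof (intro allI impI)
  fix \<epsilon> :: real assume \<epsilon>: "0 < \<epsilon>"
  define K' where "K' = max K 1"
  define \<tau> where "\<tau> = min \<sigma> (\<epsilon> / (K' * c^2))"
  have K': "0 < K'" "K \<le> K'" unfolding K'_def by auto
  have \<tau>: "0 < \<tau>" "\<tau> \<le> \<sigma>" "K' * \<tau> * c^2 \<le> \<epsilon>"
    unfolding \<tau>_def using \<sigma> \<epsilon> c K' by (auto simp: min_def field_simps)
  define \<delta> where "\<delta> = min r ((\<tau> / c)^2)"
  show "\<exists>\<delta>>0. \<forall>x. q x < \<delta> \<longrightarrow> \<bar>F x\<bar> \<le> \<epsilon> * q x"
  proof (intro exI[of _ \<delta>] conjI allI impI)
    show "0 < \<delta>" unfolding \<delta>_def using r \<tau> c by simp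
    fix x assume qx: "q x < \<delta>"
    have "0 \<le> c * sqrt (q x)" using s_nonneg[of x] s_le[of x] by linarith
    then have "0 \<le> sqrt (q x)" using c by (simp add: zero_le_mult_iff)
    then have q: "0 \<le> q x" by simp
    have "sqrt (q x) < sqrt ((\<tau> / c)^2)" using qx unfolding \<delta>_def by (intro real_sqrt_less_mono) simp
    also have "sqrt ((\<tau> / c)^2) = \<tau> / c" using \<tau> c by simp
    finally have "c * sqrt (q x) < c * (\<tau> / c)" using c by (rule mult_strict_left_mono)
    then have sx: "s x < \<tau>" using s_le[of x] c by simp
    have "s x ^ 2 \<le> (c * sqrt (q x))^2" using power_mono[OF s_le s_nonneg] .
    then have sq: "s x ^ 2 \<le> c^2 * q x" using q by (simp add: power_mult_distrib)
    have "\<bar>F x\<bar> \<le> K * s x ^ 3" using cubic qx sx \<tau>(2) unfolding \<delta>_def by simp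
    also have "\<dots> \<le> K' * s x ^ 3" using K' s_nonneg[of x] by (intro mult_right_mono) auto
    also have "\<dots> = K' * s x * s x ^ 2" by (simp add: power2_eq_square power3_eq_cube)
    also have "\<dots> \<le> K' * \<tau> * (c^2 * q x)"
      using sx sq K' s_nonneg[of x] by (intro mult_mono) auto
    also have "\<dots> \<le> \<epsilon> * q x" using \<tau>(3) q by (simp add: mult.assoc[symmetric] mult_right_mono)
    finally show "\<bar>F x\<bar> \<le> \<epsilon> * q x" .
  qed
qed

theorem theorem1:
  fixes n m :: nat and X U :: "real mat"
    and Yf Vf :: "(nat \<Rightarrow> nat \<Rightarrow> real) \<Rightarrow> real mat"
  assumes "m < n"
    and "is_matrix_coords n m X (base_p n m)"
    and "is_tangential_coords n m U (base_pstar n m)"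
    and "\<exists>r>0. \<forall>om. omsq n om < r \<longrightarrow>
            is_matrix_coords n m (Yf om) (base_p' n m om) \<and>
            is_tangential_coords n m (Vf om) (base_pstar' n m om)"
  shows "\<forall>\<epsilon>>0. \<exists>\<delta>>0. \<forall>om. omsq n om < \<delta> \<longrightarrow>
           \<bar>real (m+1) * ln (mtrace (cross_ratio X U (Yf om) (Vf om)) / real (m+1))
              - gform n m om\<bar> \<le> \<epsilon> * omsq n om"
proof -
  obtain r where r: "0 < r" and coords: "\<And>om. omsq n om < r \<Longrightarrow>
      is_matrix_coords n m (Yf om) (base_p' n m om) \<and> is_tangential_coords n m (Vf om) (base_pstar' n m om)"
    using assms(4) by blast
  define C where "C = 4 * real (n+1)^3"
  have C: "0 < C" unfolding C_def by simp
  show ?thesis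
  proof (rule little_o_square_of_cubic_bound[OF r _ _ mat_l1_nonneg mat_l1_omega_mat])
    show "0 < min (1/2) (1 / (4 * C))" using C by simp
    show "0 < real (n+1)^2" by simp
    fix om assume "omsq n om < r" and small: "mat_l1 (omega_mat n om) \<le> min (1/2) (1 / (4 * C))"
    then have "mat_l1 (omega_mat n om) \<le> 1/2" and "4 * C * mat_l1 (omega_mat n om) \<le> 1"
      using C by (auto simp: field_simps)
    with coords[OF \<open>omsq n om < r\<close>] show "\<bar>real (m+1) * ln (mtrace (cross_ratio X U (Yf om) (Vf om)) / real (m+1))
        - gform n m om\<bar> \<le> (8 * real (m+1) * C^2 + C) * mat_l1 (omega_mat n om) ^ 3"
      using abs_gform_le[OF assms(1)] abs_mtrace_cross_ratio_remainder_le[OF assms(1) _ assms(2,3)]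
        mat_l1_nonneg C
      unfolding C_def by (intro ln_ratio_expansion) auto
  qed
qed

end
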